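(* Let $G=G(n_1,n_2,p)$ where $1\ll n_1\leq n_2$ and $p=\frac{d}{\sqrt{n_1n_2}}$ for a constant $d>1$. Then whp $f(G)=o(n_1)$.
   Context: $G(n_1,n_2,p)$ is the binomial random bipartite graph: each edge of $K_{n_1,n_2}$ is present independently with probability $p$. $f(G)$ denotes the number of faces of $G$ when embedded on an orientable surface of minimal genus. $1\ll n_1$ means $n_1\to\infty$; "whp" means with probability tending to $1$ as $n_1\to\infty$. *)

theory Defs
  imports "HOL-Probability.Probability" "HOL-Combinatorics.Permutations"
begin

definition darts :: "'a set \<Rightarrow> ('a \<Rightarrow> 'a \<Rightarrow> bool) \<Rightarrow> ('a \<times> 'a) set" where
  "darts V adj = {(u, v). u \<in> V \<and> v \<in> V \<and> adj u v}"

definition rotation_system ::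
  "'a set \<Rightarrow> ('a \<Rightarrow> 'a \<Rightarrow> bool) \<Rightarrow> ('a \<times> 'a \<Rightarrow> 'a \<times> 'a) \<Rightarrow> bool" where
  "rotation_system V adj \<sigma> \<longleftrightarrow>
     \<sigma> permutes darts V adj \<and>
     (\<forall>x\<in>darts V adj. fst (\<sigma> x) = fst x) \<and>
     (\<forall>x\<in>darts V adj. \<forall>y\<in>darts V adj. fst x = fst y \<longrightarrow> (\<exists>k. (\<sigma> ^^ k) x = y))"

text \<open>Face-tracing permutation: after traversing dart (u,v), continue with the
  successor of the reverse dart (v,u) in the rotation at v.\<close>
definition face_perm :: "('a \<times> 'a \<Rightarrow> 'a \<times> 'a) \<Rightarrow> 'a \<times> 'a \<Rightarrow> 'a \<times> 'a" where
  "face_perm \<sigma> x = \<sigma> (snd x, fst x)"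

definition face_orbit :: "('a \<times> 'a \<Rightarrow> 'a \<times> 'a) \<Rightarrow> 'a \<times> 'a \<Rightarrow> ('a \<times> 'a) set" where
  "face_orbit \<sigma> x = {(face_perm \<sigma> ^^ k) x | k. True}"

definition num_faces_rot ::
  "'a set \<Rightarrow> ('a \<Rightarrow> 'a \<Rightarrow> bool) \<Rightarrow> ('a \<times> 'a \<Rightarrow> 'a \<times> 'a) \<Rightarrow> nat" where
  "num_faces_rot V adj \<sigma> = card (face_orbit \<sigma> ` darts V adj)"

definition max_faces_rot :: "'a set \<Rightarrow> ('a \<Rightarrow> 'a \<Rightarrow> bool) \<Rightarrow> nat" where
  "max_faces_rot V adj = Max (num_faces_rot V adj ` {\<sigma>. rotation_system V adj \<sigma>})"

definition num_components :: "'a set \<Rightarrow> ('a \<Rightarrow> 'a \<Rightarrow> bool) \<Rightarrow> nat" where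
  "num_components V adj =
     card {{y \<in> V. (\<lambda>a b. a \<in> V \<and> b \<in> V \<and> adj a b)\<^sup>*\<^sup>* x y} | x. x \<in> V}"

definition num_isolated :: "'a set \<Rightarrow> ('a \<Rightarrow> 'a \<Rightarrow> bool) \<Rightarrow> nat" where
  "num_isolated V adj = card {v \<in> V. \<forall>w\<in>V. \<not> adj v w}"

text \<open>A minimum genus embedding of G is the connected sum of minimum genus cellular
  embeddings of its components C_1..C_c (genus is additive over components), so
  f(G) = 1 + \<Sum>_i (f(C_i) - 1), where f(C_i) is the maximum number of faces over
  rotation systems of C_i (Heffter--Edmonds), and an isolated vertex has 1 face.
  Since faces of a rotation system stay within components, this equals the
  formula below.\<close>
definition min_genus_faces :: "'a set \<Rightarrow> ('a \<Rightarrow> 'a \<Rightarrow> bool) \<Rightarrow> int" where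
  "min_genus_faces V adj =
     int (max_faces_rot V adj) + int (num_isolated V adj) - int (num_components V adj) + 1"

definition bip_verts :: "nat \<Rightarrow> nat \<Rightarrow> (nat + nat) set" where
  "bip_verts n1 n2 = Inl ` {..<n1} \<union> Inr ` {..<n2}"

fun bip_adj :: "(nat \<times> nat \<Rightarrow> bool) \<Rightarrow> nat + nat \<Rightarrow> nat + nat \<Rightarrow> bool" where
  "bip_adj E (Inl i) (Inr j) = E (i, j)"
| "bip_adj E (Inr j) (Inl i) = E (i, j)"
| "bip_adj E _ _ = False"

definition G_bip :: "nat \<Rightarrow> nat \<Rightarrow> real \<Rightarrow> (nat \<times> nat \<Rightarrow> bool) pmf" where
  "G_bip n1 n2 p = Pi_pmf ({..<n1} \<times> {..<n2}) False (\<lambda>_. bernoulli_pmf p)"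

definition f_bip :: "nat \<Rightarrow> nat \<Rightarrow> (nat \<times> nat \<Rightarrow> bool) \<Rightarrow> int" where
  "f_bip n1 n2 E = min_genus_faces (bip_verts n1 n2) (bip_adj E)"

end

(* Fix a rotation system of G and M > 0.  A face containing the reverse of each of its darts
   contains every dart of its component, so these faces together with the isolated vertices are
   at most as many as the components.  Any other face contains a dart (u, v) but not (v, u), and
   its boundary walk leads from v back to u without using the edge uv; this gives a cycle through
   uv whose other edges come from darts of the face joining two vertices of degree at least 2
   ("core darts").  A face whose cycle has length at most M is determined by that cycle, and every
   other face contains at least M core darts.  Since f(G) is the maximal number of faces plus the
   number of isolated vertices minus the number of components plus one, this gives
     f(G) <= 1 + #core darts / M + #cycles of length <= M.
   In G(n1, n2, p) with p = d / sqrt (n1 n2) a core dart is an orientation of an edge ij where j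
   has a second neighbour i', so the expected number of core darts is at most 2 n1^2 n2 p^2 =
   2 d^2 n1, while the expected number of cycles of length 2l is at most 2 (n1 n2 p^2)^l = 2 d^(2l).
   Markov's inequality gives P(f(G) > eps n1) <= C_M / (eps n1) + 2 d^2 / (eps M); let n1 tend to
   infinity, then M. *)

theory Submission
  imports Defs "HOL-Combinatorics.Orbits" "HOL-Combinatorics.Cycles"
begin

section \<open>Paths and cycles in graphs\<close>

lemma rtranclp_imp_distinct_path:
  assumes "R\<^sup>*\<^sup>* a b"
  shows "\<exists>ps. ps \<noteq> [] \<and> hd ps = a \<and> last ps = b \<and> successively R ps \<and> distinct ps"
  using assms
proof (induction rule: rtranclp_induct)
  case base
  show ?case by (intro exI[of _ "[a]"]) simp
next
  case (step y z)
  then obtain ps where ps: "ps \<noteq> []" "hd ps = a" "last ps = y" "successively R ps" "distinct ps"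
    by blast
  show ?case
  proof (cases "z \<in> set ps")
    case True
    then obtain xs ys where split: "ps = xs @ z # ys" by (meson split_list)
    have "successively R ((xs @ [z]) @ ys)" using ps(4) split by simp
    then have "successively R (xs @ [z])" using successively_append_iff by blast
    moreover have "hd (xs @ [z]) = a" using ps(2) split by (cases xs) auto
    ultimately show ?thesis using ps(5) split by (intro exI[of _ "xs @ [z]"]) auto
  next
    case False
    have "successively R (ps @ [z])"
      using ps(1,3,4) step(2) by (auto simp: successively_append_iff)
    then show ?thesis using ps False by (intro exI[of _ "ps @ [z]"]) auto
  qed
qed

lemma set_subset_if_successively:
  assumes "successively R xs" "\<And>a b. R a b \<Longrightarrow> b \<in> A" "xs \<noteq> [] \<Longrightarrow> hd xs \<in> A"
  shows "set xs \<subseteq> A"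
  using assms by (induction xs rule: induct_list012) auto

lemma successively_snoc_hd_iff:
  assumes "c \<noteq> []"
  shows "successively R (c @ [hd c]) \<longleftrightarrow> (\<forall>i<length c. R (c ! i) (c ! (Suc i mod length c)))"
proof -
  have "Suc i mod length c = (if Suc i < length c then Suc i else 0)" if "i < length c" for i
    using that by (auto simp: mod_Suc)
  then show ?thesis
    using assms by (auto simp: successively_conv_nth nth_append hd_conv_nth less_Suc_eq)
qed

lemma inj_on_cycle_edges:
  assumes "distinct c" "3 \<le> length c"
  shows "inj_on (\<lambda>i. {c ! i, c ! (Suc i mod length c)}) {..<length c}"
proof (rule inj_onI)
  let ?L = "length c" and ?nx = "\<lambda>i. Suc i mod length c"
  fix i j assume i: "i \<in> {..<?L}" and j: "j \<in> {..<?L}"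
    and eq: "{c ! i, c ! ?nx i} = {c ! j, c ! ?nx j}"
  have nx: "?nx k < ?L" for k using assms(2) by (intro mod_less_divisor) linarith
  have nth_inj: "k < ?L \<Longrightarrow> l < ?L \<Longrightarrow> c ! k = c ! l \<longleftrightarrow> k = l" for k l
    using assms(1) by (simp add: nth_eq_iff_index_eq)
  show "i = j"
  proof (rule ccontr)
    assume "i \<noteq> j"
    then have "i = ?nx j" "?nx i = j"
      using eq i j nx nth_inj by (auto simp: doubleton_eq_iff)
    then have "Suc (Suc i) mod ?L = i" by (metis mod_Suc_eq)
    moreover have "Suc (Suc i) mod ?L \<noteq> i"
      using i assms(2) by (cases "Suc (Suc i) < ?L") (auto simp: le_mod_geq)
    ultimately show False by contradiction
  qed
qed

text \<open>A cycle is a list of its vertices, so a cycle of length L is represented by 2 L lists;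
  this only weakens the upper bounds below.\<close>

definition is_cycle :: "'a set \<Rightarrow> ('a \<Rightarrow> 'a \<Rightarrow> bool) \<Rightarrow> 'a list \<Rightarrow> bool" where
  "is_cycle V adj c \<longleftrightarrow>
     distinct c \<and> 3 \<le> length c \<and> set c \<subseteq> V \<and> successively adj (c @ [hd c])"

definition short_cycles :: "'a set \<Rightarrow> ('a \<Rightarrow> 'a \<Rightarrow> bool) \<Rightarrow> nat \<Rightarrow> 'a list set" where
  "short_cycles V adj M = {c. is_cycle V adj c \<and> length c \<le> M}"

lemma finite_short_cycles: "finite V \<Longrightarrow> finite (short_cycles V adj M)"
  by (rule finite_subset[OF _ finite_lists_length_le[of V M]])
     (auto simp: short_cycles_def is_cycle_def)

lemma is_cycle_rotate1:
  assumes "is_cycle V adj c"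
  shows "is_cycle V adj (rotate1 c)"
proof -
  have "3 \<le> length c" using assms by (simp add: is_cycle_def)
  then obtain x y ys where c: "c = x # y # ys"
    by (auto simp: numeral_3_eq_3 Suc_le_length_iff)
  have "adj x y" "successively adj (y # ys @ [x])"
    using assms unfolding c by (simp_all add: is_cycle_def)
  then have "successively adj ((y # ys @ [x]) @ [y])"
    by (subst successively_append_iff) simp
  then show ?thesis using assms unfolding c by (auto simp: is_cycle_def)
qed

lemma is_cycle_rotate: "is_cycle V adj c \<Longrightarrow> is_cycle V adj (rotate n c)"
  by (induction n) (simp_all add: is_cycle_rotate1)

definition core_darts :: "'a set \<Rightarrow> ('a \<Rightarrow> 'a \<Rightarrow> bool) \<Rightarrow> ('a \<times> 'a) set" where
  "core_darts V adj = {(a, b) \<in> darts V adj.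
     (\<exists>w\<in>V. adj a w \<and> w \<noteq> b) \<and> (\<exists>w\<in>V. adj b w \<and> w \<noteq> a)}"

lemma core_darts_swap:
  assumes "\<And>a b. adj a b = adj b a" "(a, b) \<in> core_darts V adj"
  shows "(b, a) \<in> core_darts V adj"
  using assms by (auto simp: core_darts_def darts_def)

lemma is_cycle_Cons_core_dart:
  assumes sym: "\<And>a b. adj a b = adj b a" and c: "is_cycle V adj (a # b # cs)"
  shows "(a, b) \<in> core_darts V adj"
proof -
  have "cs \<noteq> []" using c by (auto simp: is_cycle_def)
  moreover have "successively adj (a # b # cs @ [a])" using c by (simp add: is_cycle_def)
  ultimately have "adj a b" "adj b (hd cs)" "adj (last cs) a"
    by (auto simp: successively_append_iff successively_Cons)
  moreover have "last cs \<in> set cs" "hd cs \<in> set cs" using \<open>cs \<noteq> []\<close> by simp_all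
  ultimately show ?thesis
    using c sym[of a "last cs"] unfolding core_darts_def darts_def is_cycle_def by auto
qed

lemma is_cycle_core_dart:
  assumes sym: "\<And>a b. adj a b = adj b a" and c: "is_cycle V adj c" and i: "i < length c"
  shows "(c ! i, c ! (Suc i mod length c)) \<in> core_darts V adj"
proof -
  have "c \<noteq> []" using i by auto
  have "3 \<le> length (rotate i c)" using c by (simp add: is_cycle_def)
  then obtain a b cs where abc: "rotate i c = a # b # cs"
    by (metis Suc_le_length_iff numeral_3_eq_3 Suc_leD)
  have "rotate i c ! 0 = c ! i" "rotate i c ! 1 = c ! (Suc i mod length c)"
    using nth_rotate[of 0 c i] nth_rotate[of 1 c i] \<open>3 \<le> length (rotate i c)\<close> i
    by (simp_all add: \<open>c \<noteq> []\<close>)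
  then have "a = c ! i" "b = c ! (Suc i mod length c)" using abc by simp_all
  moreover have "is_cycle V adj (a # b # cs)" using is_cycle_rotate[OF c, of i] abc by simp
  ultimately show ?thesis using is_cycle_Cons_core_dart[OF sym] by simp
qed

definition component :: "'a set \<Rightarrow> ('a \<Rightarrow> 'a \<Rightarrow> bool) \<Rightarrow> 'a \<Rightarrow> 'a set" where
  "component V adj x = {y \<in> V. (\<lambda>a b. a \<in> V \<and> b \<in> V \<and> adj a b)\<^sup>*\<^sup>* x y}"

lemma num_components_eq_card_component: "num_components V adj = card (component V adj ` V)"
  unfolding num_components_def component_def by (simp add: setcompr_eq_image)

lemma component_isolated:
  assumes "v \<in> V" "\<forall>w\<in>V. \<not> adj v w"
  shows "component V adj v = {v}"
proof -
  have "y = v" if "(\<lambda>a b. a \<in> V \<and> b \<in> V \<and> adj a b)\<^sup>*\<^sup>* v y" for y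
    using that by (rule converse_rtranclpE) (use assms in auto)
  then show ?thesis using assms(1) by (auto simp: component_def)
qed

lemma dart_in_component: "(a, b) \<in> darts V adj \<Longrightarrow> {a, b} \<subseteq> component V adj a"
  by (auto simp: component_def darts_def)

lemma component_dart_ne_isolated:
  assumes "(a, b) \<in> darts V adj" "v \<in> V" "\<forall>w\<in>V. \<not> adj v w"
  shows "component V adj a \<noteq> component V adj v"
  using dart_in_component[OF assms(1)] component_isolated[of v V adj] assms
  by (auto simp: darts_def)

lemma card_add_le_if_disjoint_inj:
  assumes "inj_on f A" "inj_on g B" "f ` A \<inter> g ` B = {}" "f ` A \<union> g ` B \<subseteq> C" "finite C"
  shows "card A + card B \<le> card C"
proof -
  have "finite (f ` A)" "finite (g ` B)" using assms(4,5) finite_subset by blast+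
  then have "card A + card B = card (f ` A \<union> g ` B)"
    using assms(1-3) by (simp add: card_Un_disjoint card_image)
  also have "\<dots> \<le> card C" using assms(4,5) by (rule card_mono[rotated])
  finally show ?thesis .
qed

lemma card_mult_le_if_disjoint:
  assumes "finite K" "finite F" "pairwise disjnt F" "\<And>X. X \<in> F \<Longrightarrow> M \<le> card (X \<inter> K)"
  shows "card F * M \<le> card K"
proof -
  have "card F * M = (\<Sum>X\<in>F. M)" by simp
  also have "\<dots> \<le> (\<Sum>X\<in>F. card (X \<inter> K))" using assms(4) by (rule sum_mono)
  also have "\<dots> = card (\<Union>X\<in>F. X \<inter> K)"
    using assms(1-3) by (intro card_UN_disjoint[symmetric]) (auto simp: pairwise_def disjnt_def)
  also have "\<dots> \<le> card K" using assms(1) by (rule card_mono) auto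
  finally show ?thesis .
qed

lemma length_le_card_if_edges_covered:
  assumes "distinct c" "3 \<le> length c" "finite A"
    and "\<And>i. Suc i < length c \<Longrightarrow> \<exists>y\<in>A. {fst y, snd y} = {c ! i, c ! Suc i}"
  shows "length c - 1 \<le> card A"
proof -
  let ?e = "\<lambda>i. {c ! i, c ! Suc i}"
  have "inj_on (\<lambda>i. {c ! i, c ! (Suc i mod length c)}) {..<length c - 1}"
    using inj_on_cycle_edges[OF assms(1,2)] by (rule inj_on_subset) auto
  then have "inj_on ?e {..<length c - 1}" by (rule inj_on_cong[THEN iffD1, rotated]) simp
  then have "length c - 1 = card (?e ` {..<length c - 1})" by (simp add: card_image)
  also have "\<dots> \<le> card ((\<lambda>y. {fst y, snd y}) ` A)"
  proof (rule card_mono)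
    show "finite ((\<lambda>y. {fst y, snd y}) ` A)" using assms(3) by simp
  next
    show "?e ` {..<length c - 1} \<subseteq> (\<lambda>y. {fst y, snd y}) ` A"
    proof (rule image_subsetI)
      fix i assume "i \<in> {..<length c - 1}"
      then have "Suc i < length c" by simp
      then obtain y where "y \<in> A" "{fst y, snd y} = {c ! i, c ! Suc i}" using assms(4) by blast
      then show "{c ! i, c ! Suc i} \<in> (\<lambda>y. {fst y, snd y}) ` A" by (simp add: rev_image_eqI)
    qed
  qed
  also have "\<dots> \<le> card A" by (rule card_image_le[OF assms(3)])
  finally show ?thesis .
qed

section \<open>Faces of a rotation system\<close>

locale graph_rotation =
  fixes V :: "'a set" and adj :: "'a \<Rightarrow> 'a \<Rightarrow> bool" and \<sigma> :: "'a \<times> 'a \<Rightarrow> 'a \<times> 'a"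
  assumes finite_V: "finite V"
    and adj_sym: "adj a b = adj b a"
    and adj_irrefl: "\<not> adj a a"
    and rotation: "rotation_system V adj \<sigma>"
begin

abbreviation "D \<equiv> darts V adj"
abbreviation "K \<equiv> core_darts V adj"

lemma dart_iff: "(a, b) \<in> D \<longleftrightarrow> a \<in> V \<and> b \<in> V \<and> adj a b"
  by (simp add: darts_def)

lemma dart_swap: "(a, b) \<in> D \<Longrightarrow> (b, a) \<in> D"
  using adj_sym by (auto simp: dart_iff)

lemma finite_darts: "finite D"
  by (rule finite_subset[of _ "V \<times> V"]) (auto simp: darts_def finite_V)

lemma finite_core_darts: "finite K"
  by (rule finite_subset[OF _ finite_darts]) (auto simp: core_darts_def)

lemma rotation_permutes: "\<sigma> permutes D"
  using rotation by (simp add: rotation_system_def)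

lemma face_perm_in_darts: "x \<in> D \<Longrightarrow> face_perm \<sigma> x \<in> D"
  using rotation_permutes by (cases x) (simp add: face_perm_def dart_swap permutes_in_image)

lemma fst_face_perm: "x \<in> D \<Longrightarrow> fst (face_perm \<sigma> x) = snd x"
  using rotation dart_swap by (cases x) (simp add: face_perm_def rotation_system_def)

lemma face_perm_funpow_in_darts: "x \<in> D \<Longrightarrow> (face_perm \<sigma> ^^ n) x \<in> D"
  by (induction n) (simp_all add: face_perm_in_darts)

abbreviation "\<phi> \<equiv> restrict_id (face_perm \<sigma>) D"

lemma face_perm_restrict_permutes: "\<phi> permutes D"
proof -
  have "bij_betw prod.swap D D"
    by (rule bij_betwI[of _ _ _ prod.swap]) (auto intro: dart_swap)
  then have "bij_betw (\<sigma> \<circ> prod.swap) D D"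
    using permutes_imp_bij[OF rotation_permutes] by (rule bij_betw_trans)
  moreover have "\<sigma> \<circ> prod.swap = face_perm \<sigma>" by (auto simp: fun_eq_iff face_perm_def)
  ultimately show ?thesis by (metis permutes_restrict_id)
qed

lemma funpow_face_perm_restrict: "x \<in> D \<Longrightarrow> (\<phi> ^^ n) x = (face_perm \<sigma> ^^ n) x"
  by (induction n) (simp_all add: face_perm_funpow_in_darts)

lemma face_perm_restrict_permutation: "permutation \<phi>"
  using face_perm_restrict_permutes finite_darts by (auto simp: permutation_permutes)

lemma face_orbit_eq_orbit: "x \<in> D \<Longrightarrow> face_orbit \<sigma> x = orbit \<phi> x"
  by (simp add: orbit_altdef_permutation[OF face_perm_restrict_permutation] face_orbit_def
      funpow_face_perm_restrict)

lemma face_perm_periodic: "x \<in> D \<Longrightarrow> \<exists>n>0. (face_perm \<sigma> ^^ n) x = x"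
  using permutation_self[OF face_perm_restrict_permutation, of x]
  by (auto simp: funpow_face_perm_restrict)

lemma face_orbit_self: "x \<in> face_orbit \<sigma> x"
  unfolding face_orbit_def by (metis (mono_tags) CollectI funpow_0)

lemma face_orbit_subset_darts: "x \<in> D \<Longrightarrow> face_orbit \<sigma> x \<subseteq> D"
  by (auto simp: face_orbit_def face_perm_funpow_in_darts)

lemma face_perm_in_face_orbit: "y \<in> face_orbit \<sigma> x \<Longrightarrow> face_perm \<sigma> y \<in> face_orbit \<sigma> x"
  unfolding face_orbit_def by (auto intro: exI[of _ "Suc k" for k])

lemma face_orbit_eqI:
  assumes "x \<in> D" "y \<in> face_orbit \<sigma> x"
  shows "face_orbit \<sigma> y = face_orbit \<sigma> x"
proof -
  have "y \<in> D" using assms face_orbit_subset_darts by blast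
  have "cyclic_on \<phi> (orbit \<phi> x)"
    using face_perm_restrict_permutes finite_darts by (rule cyclic_on_orbit)
  then show ?thesis
    using assms \<open>y \<in> D\<close> by (simp add: face_orbit_eq_orbit orbit_cyclic_eq3)
qed

lemma sym_face_contains_darts_at:
  assumes x: "x \<in> D" and sym: "sym (face_orbit \<sigma> x)"
    and ab: "(a, b) \<in> face_orbit \<sigma> x" and az: "(a, z) \<in> D"
  shows "(a, z) \<in> face_orbit \<sigma> x"
proof -
  let ?O = "face_orbit \<sigma> x"
  have closed: "\<sigma> y \<in> ?O" if "y \<in> ?O" for y
  proof -
    have "(snd y, fst y) \<in> ?O" using sym that by (cases y) (auto dest: symD)
    then show ?thesis using face_perm_in_face_orbit by (fastforce simp: face_perm_def)
  qed
  have "(\<sigma> ^^ n) (a, b) \<in> ?O" for n by (induction n) (simp_all add: ab closed)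
  moreover have "(a, b) \<in> D" using ab x face_orbit_subset_darts by blast
  then obtain k where "(\<sigma> ^^ k) (a, b) = (a, z)"
    using rotation az by (fastforce simp: rotation_system_def)
  ultimately show ?thesis by metis
qed

lemma sym_face_contains_component:
  assumes x: "x \<in> D" and sym: "sym (face_orbit \<sigma> x)"
    and w: "w \<in> component V adj (fst x)" and wz: "(w, z) \<in> D"
  shows "(w, z) \<in> face_orbit \<sigma> x"
proof -
  let ?O = "face_orbit \<sigma> x"
  have "(\<lambda>a b. a \<in> V \<and> b \<in> V \<and> adj a b)\<^sup>*\<^sup>* (fst x) w" using w by (simp add: component_def)
  then have "\<exists>b. (w, b) \<in> ?O"
  proof (induction rule: rtranclp_induct)
    case base
    have "(fst x, snd x) \<in> ?O" using face_orbit_self[of x] by simp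
    then show ?case by blast
  next
    case (step y y')
    then obtain b where b: "(y, b) \<in> ?O" by blast
    have "(y, y') \<in> D" using step(2) by (simp add: dart_iff)
    with b have "(y, y') \<in> ?O" by (rule sym_face_contains_darts_at[OF x sym])
    then have "(y', y) \<in> ?O" using sym by (rule symD[rotated])
    then show ?case by blast
  qed
  then show ?thesis using sym_face_contains_darts_at[OF x sym _ wz] by blast
qed

lemma sym_faces_eqI:
  assumes "x \<in> D" "y \<in> D" "sym (face_orbit \<sigma> x)"
    and "component V adj (fst x) = component V adj (fst y)"
  shows "face_orbit \<sigma> x = face_orbit \<sigma> y"
proof -
  have "fst y \<in> component V adj (fst x)"
    using assms(2,4) dart_in_component[of "fst y" "snd y"] by auto
  then have "y \<in> face_orbit \<sigma> x"
    using sym_face_contains_component[OF assms(1,3)] assms(2) by (metis prod.collapse)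
  then show ?thesis using face_orbit_eqI[OF assms(1)] by simp
qed

text \<open>Distinct symmetric faces lie in distinct components, since each contains all darts of its
  component; these components contain an edge, unlike those of isolated vertices.\<close>

lemma card_sym_faces_le:
  "card {X \<in> face_orbit \<sigma> ` D. sym X} + num_isolated V adj \<le> num_components V adj"
proof -
  let ?FS = "{X \<in> face_orbit \<sigma> ` D. sym X}" and ?I = "{v \<in> V. \<forall>w\<in>V. \<not> adj v w}"
  define rep where "rep X = (SOME x. x \<in> X)" for X :: "('a \<times> 'a) set"
  define comp where "comp X = component V adj (fst (rep X))" for X
  have rep: "rep X \<in> D" "X = face_orbit \<sigma> (rep X)" if X: "X \<in> ?FS" for X
  proof -
    obtain x where x: "x \<in> D" "X = face_orbit \<sigma> x" using X by blast
    then have "x \<in> X" using face_orbit_self by simp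
    then have "rep X \<in> X" unfolding rep_def by (rule someI)
    then show "rep X \<in> D" "X = face_orbit \<sigma> (rep X)"
      using x face_orbit_subset_darts face_orbit_eqI by blast+
  qed
  have "inj_on comp ?FS"
  proof (rule inj_onI)
    fix X Y assume X: "X \<in> ?FS" and Y: "Y \<in> ?FS" and eq: "comp X = comp Y"
    have "sym (face_orbit \<sigma> (rep X))" using X rep(2)[OF X] by simp
    then have "face_orbit \<sigma> (rep X) = face_orbit \<sigma> (rep Y)"
      using eq unfolding comp_def by (rule sym_faces_eqI[OF rep(1)[OF X] rep(1)[OF Y]])
    then show "X = Y" using rep(2)[OF X] rep(2)[OF Y] by simp
  qed
  moreover have "inj_on (component V adj) ?I"
    by (rule inj_onI) (simp add: component_isolated)
  moreover have "comp X \<noteq> component V adj v" if "X \<in> ?FS" "v \<in> ?I" for X v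
    using component_dart_ne_isolated[of "fst (rep X)" "snd (rep X)"] rep(1) that
    by (simp add: comp_def)
  then have "comp ` ?FS \<inter> component V adj ` ?I = {}" by blast
  moreover have "fst (rep X) \<in> V" if "X \<in> ?FS" for X
    using rep(1)[OF that] by (cases "rep X") (simp add: dart_iff)
  then have "comp ` ?FS \<union> component V adj ` ?I \<subseteq> component V adj ` V"
    unfolding comp_def by blast
  ultimately show ?thesis
    unfolding num_isolated_def num_components_eq_card_component
    by (intro card_add_le_if_disjoint_inj) (simp_all add: finite_V)
qed

lemma nonsym_face_detour:
  assumes x: "x \<in> D" and uv: "(u, v) \<in> face_orbit \<sigma> x" and vu: "(v, u) \<notin> face_orbit \<sigma> x"
  shows "(\<lambda>a b. (a, b) \<in> face_orbit \<sigma> x - {(u, v)} \<or> (b, a) \<in> face_orbit \<sigma> x - {(u, v)})\<^sup>*\<^sup>* v u"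
    (is "?R\<^sup>*\<^sup>* v u")
proof (rule ccontr)
  assume no_detour: "\<not> ?R\<^sup>*\<^sup>* v u"
  \<comment> \<open>Then Z is closed under the face permutation away from (u, v) and contains the successor
    of (u, v), hence the whole face, including (u, v).\<close>
  let ?O = "face_orbit \<sigma> x" and ?f = "face_perm \<sigma>"
  define Z where "Z = {y \<in> ?O. ?R\<^sup>*\<^sup>* v (fst y)}"
  have uv_D: "(u, v) \<in> D" using uv x face_orbit_subset_darts by blast
  have "(u, v) \<notin> Z" using no_detour by (simp add: Z_def)
  have step: "?f y \<in> Z" if "y \<in> Z" for y
  proof -
    have y: "y \<in> ?O" "?R\<^sup>*\<^sup>* v (fst y)" "y \<noteq> (u, v)"
      using that \<open>(u, v) \<notin> Z\<close> by (auto simp: Z_def)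
    then have "?R (fst y) (snd y)" by (cases y) simp
    with y(2) have "?R\<^sup>*\<^sup>* v (snd y)" by (rule rtranclp.rtrancl_into_rtrancl)
    moreover have "y \<in> D" using y(1) face_orbit_subset_darts[OF x] by blast
    then have "fst (?f y) = snd y" by (rule fst_face_perm)
    ultimately show ?thesis using face_perm_in_face_orbit[OF y(1)] by (simp add: Z_def)
  qed
  have "?f (u, v) \<in> Z"
    using face_perm_in_face_orbit[OF uv] fst_face_perm[OF uv_D] by (simp add: Z_def)
  then have in_Z: "(?f ^^ n) (?f (u, v)) \<in> Z" for n by (induction n) (simp_all add: step)
  obtain n where "n > 0" "(?f ^^ n) (u, v) = (u, v)" using face_perm_periodic[OF uv_D] by blast
  then have "(?f ^^ Suc (n - 1)) (u, v) = (u, v)" by simp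
  then have "(?f ^^ (n - 1)) (?f (u, v)) = (u, v)" by (simp only: funpow_Suc_right comp_apply)
  then show False using in_Z[of "n - 1"] \<open>(u, v) \<notin> Z\<close> by simp
qed

lemma nonsym_face_detour_cycle:
  assumes x: "x \<in> D" and uv: "(u, v) \<in> face_orbit \<sigma> x" and vu: "(v, u) \<notin> face_orbit \<sigma> x"
  obtains c where "is_cycle V adj c" "hd c = v" "last c = u"
    "successively (\<lambda>a b. (a, b) \<in> face_orbit \<sigma> x - {(u, v)} \<or> (b, a) \<in> face_orbit \<sigma> x - {(u, v)}) c"
proof -
  let ?O' = "face_orbit \<sigma> x - {(u, v)}"
  let ?R = "\<lambda>a b. (a, b) \<in> ?O' \<or> (b, a) \<in> ?O'"
  obtain ps where ps: "ps \<noteq> []" "hd ps = v" "last ps = u" "successively ?R ps" "distinct ps"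
    using rtranclp_imp_distinct_path[OF nonsym_face_detour[OF x uv vu]] by blast
  have R_adj: "adj a b \<and> b \<in> V" if "?R a b" for a b
    using that face_orbit_subset_darts[OF x] adj_sym by (auto simp: dart_iff)
  have uv_D: "(u, v) \<in> D" using uv x face_orbit_subset_darts by blast
  have "length ps \<noteq> 1"
  proof
    assume "length ps = 1"
    then obtain a where "ps = [a]" by (auto simp: length_Suc_conv)
    then show False using ps(2,3) uv_D adj_irrefl by (simp add: dart_iff)
  qed
  moreover have "length ps \<noteq> 2"
  proof
    assume "length ps = 2"
    then obtain a b where "ps = [a, b]" by (auto simp: length_Suc_conv numeral_2_eq_2)
    then show False using ps(2-4) vu by simp
  qed
  moreover have "length ps \<noteq> 0" using ps(1) by simp
  ultimately have "3 \<le> length ps" by arith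
  moreover have "set ps \<subseteq> V"
    using ps(1,2) uv_D R_adj by (intro set_subset_if_successively[OF ps(4)]) (auto simp: dart_iff)
  moreover have "successively adj (ps @ [hd ps])"
    using successively_mono[OF ps(4)] R_adj ps(1-3) uv_D
    by (auto simp: successively_append_iff dart_iff)
  ultimately have "is_cycle V adj ps" using ps(5) by (simp add: is_cycle_def)
  then show ?thesis using that ps(2-4) by blast
qed

lemma nonsym_face_cycle:
  assumes x: "x \<in> D" and nonsym: "\<not> sym (face_orbit \<sigma> x)"
  shows "\<exists>c. is_cycle V adj c \<and> (last c, hd c) \<in> face_orbit \<sigma> x \<and>
           length c - 1 \<le> card (face_orbit \<sigma> x \<inter> K)"
proof -
  let ?O = "face_orbit \<sigma> x"
  obtain u v where uv: "(u, v) \<in> ?O" and vu: "(v, u) \<notin> ?O"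
    using nonsym unfolding sym_def by blast
  obtain c where c: "is_cycle V adj c" "hd c = v" "last c = u"
    and path: "successively (\<lambda>a b. (a, b) \<in> ?O - {(u, v)} \<or> (b, a) \<in> ?O - {(u, v)}) c"
    by (rule nonsym_face_detour_cycle[OF x uv vu])
  have "length c - 1 \<le> card (?O \<inter> K)"
  proof (rule length_le_card_if_edges_covered)
    show "distinct c" "3 \<le> length c" using c(1) by (simp_all add: is_cycle_def)
    show "finite (?O \<inter> K)" using finite_core_darts by simp
  next
    fix i assume i: "Suc i < length c"
    then have core: "(c ! i, c ! Suc i) \<in> K"
      using is_cycle_core_dart[OF adj_sym c(1), of i] by simp
    have "(c ! i, c ! Suc i) \<in> ?O \<or> (c ! Suc i, c ! i) \<in> ?O"
      using successively_nth[OF path i] by blast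
    then show "\<exists>y\<in>?O \<inter> K. {fst y, snd y} = {c ! i, c ! Suc i}"
    proof
      assume "(c ! i, c ! Suc i) \<in> ?O"
      then show ?thesis using core by (intro bexI[of _ "(c ! i, c ! Suc i)"]) simp_all
    next
      assume "(c ! Suc i, c ! i) \<in> ?O"
      then show ?thesis using core_darts_swap[OF adj_sym core]
        by (intro bexI[of _ "(c ! Suc i, c ! i)"]) (simp_all add: insert_commute)
    qed
  qed
  then show ?thesis using c uv by blast
qed

lemma face_eq_face_orbit: "X \<in> face_orbit \<sigma> ` D \<Longrightarrow> y \<in> X \<Longrightarrow> X = face_orbit \<sigma> y"
  using face_orbit_eqI by blast

lemma pairwise_disjnt_faces: "pairwise disjnt (face_orbit \<sigma> ` D)"
proof (rule pairwiseI)
  fix X Y assume "X \<in> face_orbit \<sigma> ` D" "Y \<in> face_orbit \<sigma> ` D" "X \<noteq> Y"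
  then show "disjnt X Y" unfolding disjnt_def using face_eq_face_orbit by blast
qed

text \<open>A face X is recovered from its cycle c as the face of the dart (last c, hd c).\<close>

definition face_cycle :: "('a \<times> 'a) set \<Rightarrow> 'a list" where
  "face_cycle X = (SOME c. is_cycle V adj c \<and> (last c, hd c) \<in> X \<and> length c - 1 \<le> card (X \<inter> K))"

lemma face_cycle_spec:
  assumes "X \<in> face_orbit \<sigma> ` D" "\<not> sym X"
  shows "is_cycle V adj (face_cycle X)" "(last (face_cycle X), hd (face_cycle X)) \<in> X"
    "length (face_cycle X) - 1 \<le> card (X \<inter> K)"
proof -
  obtain x where "x \<in> D" "X = face_orbit \<sigma> x" using assms(1) by blast
  then have "\<exists>c. is_cycle V adj c \<and> (last c, hd c) \<in> X \<and> length c - 1 \<le> card (X \<inter> K)"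
    using nonsym_face_cycle assms(2) by blast
  then show "is_cycle V adj (face_cycle X)" "(last (face_cycle X), hd (face_cycle X)) \<in> X"
    "length (face_cycle X) - 1 \<le> card (X \<inter> K)"
    unfolding face_cycle_def by (metis (mono_tags, lifting) someI_ex)+
qed

lemma card_short_nonsym_faces_le:
  "card {X \<in> face_orbit \<sigma> ` D. \<not> sym X \<and> length (face_cycle X) \<le> M} \<le> card (short_cycles V adj M)"
proof (rule card_inj_on_le)
  let ?F = "{X \<in> face_orbit \<sigma> ` D. \<not> sym X \<and> length (face_cycle X) \<le> M}"
  show "inj_on face_cycle ?F"
  proof (rule inj_onI)
    fix X Y assume X: "X \<in> ?F" and Y: "Y \<in> ?F" and eq: "face_cycle X = face_cycle Y"
    have "X = face_orbit \<sigma> (last (face_cycle X), hd (face_cycle X))"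
      using X by (intro face_eq_face_orbit face_cycle_spec(2)) simp_all
    moreover have "Y = face_orbit \<sigma> (last (face_cycle Y), hd (face_cycle Y))"
      using Y by (intro face_eq_face_orbit face_cycle_spec(2)) simp_all
    ultimately show "X = Y" using eq by simp
  qed
  show "face_cycle ` ?F \<subseteq> short_cycles V adj M"
  proof (rule image_subsetI)
    fix X assume "X \<in> ?F"
    then show "face_cycle X \<in> short_cycles V adj M"
      using face_cycle_spec(1)[of X] by (simp add: short_cycles_def)
  qed
  show "finite (short_cycles V adj M)" using finite_V by (rule finite_short_cycles)
qed

lemma card_long_nonsym_faces_le:
  "card {X \<in> face_orbit \<sigma> ` D. \<not> sym X \<and> M < length (face_cycle X)} * M \<le> card K"
proof (rule card_mult_le_if_disjoint[OF finite_core_darts])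
  let ?F = "{X \<in> face_orbit \<sigma> ` D. \<not> sym X \<and> M < length (face_cycle X)}"
  show "finite ?F" using finite_darts by simp
  show "pairwise disjnt ?F" using pairwise_disjnt_faces by (rule pairwise_subset) blast
  show "M \<le> card (X \<inter> K)" if "X \<in> ?F" for X using that face_cycle_spec(3)[of X] by auto
qed

lemma num_faces_rot_le:
  assumes "M > 0"
  shows "real (num_faces_rot V adj \<sigma>) + real (num_isolated V adj) \<le>
    real (num_components V adj) + real (card K) / real M + real (card (short_cycles V adj M))"
proof -
  let ?F = "face_orbit \<sigma> ` D"
  let ?S = "{X \<in> ?F. sym X}"
  let ?N1 = "{X \<in> ?F. \<not> sym X \<and> length (face_cycle X) \<le> M}"
  let ?N2 = "{X \<in> ?F. \<not> sym X \<and> M < length (face_cycle X)}"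
  have fin: "finite ?F" using finite_darts by simp
  have "?F = ?S \<union> ?N1 \<union> ?N2" by auto
  then have "num_faces_rot V adj \<sigma> = card (?S \<union> ?N1 \<union> ?N2)" by (simp add: num_faces_rot_def)
  also have "\<dots> = card (?S \<union> ?N1) + card ?N2" by (rule card_Un_disjoint) (use fin in auto)
  also have "card (?S \<union> ?N1) = card ?S + card ?N1" by (rule card_Un_disjoint) (use fin in auto)
  finally have "num_faces_rot V adj \<sigma> = card ?S + card ?N1 + card ?N2" .
  moreover have "real (card ?N2) \<le> real (card K) / real M"
    using card_long_nonsym_faces_le[of M] assms by (simp add: pos_le_divide_eq flip: of_nat_mult)
  moreover have "card ?S + num_isolated V adj \<le> num_components V adj"
    by (rule card_sym_faces_le)
  moreover note card_short_nonsym_faces_le[of M]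
  ultimately show ?thesis by linarith
qed

end

section \<open>Existence of rotation systems\<close>

lemma fibrewise_permutes:
  assumes perm: "\<And>a. c a permutes {x \<in> S. g x = a}"
  shows "(\<lambda>x. c (g x) x) permutes S"
    and "g (c (g x) x) = g x"
    and "((\<lambda>x. c (g x) x) ^^ n) x = (c (g x) ^^ n) x"
proof -
  have fibre: "g (p (g x) x) = g x" if p: "\<And>a. p a permutes {y \<in> S. g y = a}" for p x
  proof (cases "x \<in> S")
    case True
    then have "p (g x) x \<in> {y \<in> S. g y = g x}" using permutes_in_image[OF p[of "g x"]] by simp
    then show ?thesis by simp
  next
    case False
    then show ?thesis using permutes_not_in[OF p[of "g x"]] by simp
  qed
  show c_fibre: "g (c (g x) x) = g x" for x by (rule fibre) (rule perm)
  have inv_fibre: "g (inv (c (g x)) x) = g x" for x by (rule fibre) (rule permutes_inv[OF perm])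
  show "(\<lambda>x. c (g x) x) permutes S"
  proof (rule bij_imp_permutes)
    show "bij_betw (\<lambda>x. c (g x) x) S S"
    proof (rule bij_betw_byWitness[where f' = "\<lambda>x. inv (c (g x)) x"])
      show "\<forall>x\<in>S. inv (c (g (c (g x) x))) (c (g x) x) = x"
        using c_fibre permutes_inverses(2)[OF perm] by simp
      show "\<forall>x\<in>S. c (g (inv (c (g x)) x)) (inv (c (g x)) x) = x"
        using inv_fibre permutes_inverses(1)[OF perm] by simp
      show "(\<lambda>x. c (g x) x) ` S \<subseteq> S"
        using permutes_in_image[OF perm] by fastforce
      show "(\<lambda>x. inv (c (g x)) x) ` S \<subseteq> S"
        using permutes_in_image[OF permutes_inv[OF perm]] by fastforce
    qed
    show "c (g x) x = x" if "x \<notin> S" for x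
      by (rule permutes_not_in[OF perm[of "g x"]]) (use that in simp)
  qed
  have "g ((c (g x) ^^ n) x) = g x" for n
    by (induction n) (simp_all, metis c_fibre)
  then show "((\<lambda>x. c (g x) x) ^^ n) x = (c (g x) ^^ n) x"
    by (induction n) simp_all
qed

lemma exists_transitive_permutation:
  assumes "finite S"
  shows "\<exists>c. c permutes S \<and> (\<forall>x\<in>S. \<forall>y\<in>S. \<exists>k. (c ^^ k) x = y)"
proof -
  obtain l where l: "set l = S" "distinct l" using finite_distinct_list[OF assms] by blast
  have "\<exists>k. (cycle_of_list l ^^ k) x = y" if xy: "x \<in> S" "y \<in> S" for x y
  proof -
    obtain i where i: "i < length l" "l ! i = x" using xy(1) l(1) by (auto simp: in_set_conv_nth)
    obtain j where j: "j < length l" "l ! j = y" using xy(2) l(1) by (auto simp: in_set_conv_nth)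
    have "(cycle_of_list l ^^ (length l - i + j)) x = rotate (length l - i + j) l ! i"
      using cyclic_rotation[OF l(2), of "length l - i + j"] i by (metis nth_map)
    also have "\<dots> = l ! ((length l + j) mod length l)" using i by (simp add: nth_rotate)
    also have "\<dots> = y" using j by simp
    finally show ?thesis by blast
  qed
  then show ?thesis using cycle_permutes[of l] l(1) by blast
qed

lemma rotation_system_exists:
  assumes "finite V"
  shows "\<exists>\<sigma>. rotation_system V adj \<sigma>"
proof -
  let ?D = "darts V adj"
  let ?Da = "\<lambda>a. {x \<in> ?D. fst x = a}"
  have "finite ?D" by (rule finite_subset[of _ "V \<times> V"]) (auto simp: darts_def assms)
  then have "\<exists>c. c permutes ?Da a \<and> (\<forall>x\<in>?Da a. \<forall>y\<in>?Da a. \<exists>k. (c ^^ k) x = y)" for a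
    by (intro exists_transitive_permutation) simp
  then have "\<forall>a. \<exists>c. c permutes ?Da a \<and> (\<forall>x\<in>?Da a. \<forall>y\<in>?Da a. \<exists>k. (c ^^ k) x = y)"
    by blast
  then have "\<exists>c. \<forall>a. c a permutes ?Da a \<and> (\<forall>x\<in>?Da a. \<forall>y\<in>?Da a. \<exists>k. (c a ^^ k) x = y)"
    by (rule choice)
  then obtain c where c: "\<And>a. c a permutes ?Da a"
    and trans: "\<And>a. \<forall>x\<in>?Da a. \<forall>y\<in>?Da a. \<exists>k. (c a ^^ k) x = y"
    by blast
  define \<sigma> where "\<sigma> x = c (fst x) x" for x
  have "\<sigma> permutes ?D" unfolding \<sigma>_def by (rule fibrewise_permutes(1)[OF c])
  moreover have "fst (\<sigma> x) = fst x" for x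
    unfolding \<sigma>_def by (rule fibrewise_permutes(2)[OF c])
  moreover have "\<exists>k. (\<sigma> ^^ k) x = y" if xy: "x \<in> ?D" "y \<in> ?D" "fst x = fst y" for x y
  proof -
    have "x \<in> ?Da (fst x)" "y \<in> ?Da (fst x)" using xy by auto
    then obtain k where "(c (fst x) ^^ k) x = y" using trans[of "fst x"] by blast
    then show ?thesis unfolding \<sigma>_def fibrewise_permutes(3)[OF c] by blast
  qed
  ultimately show ?thesis unfolding rotation_system_def by blast
qed

lemma finite_rotation_systems:
  assumes "finite V"
  shows "finite {\<sigma>. rotation_system V adj \<sigma>}"
proof -
  have "finite (darts V adj)"
    by (rule finite_subset[of _ "V \<times> V"]) (auto simp: darts_def assms)
  then have "finite {\<sigma>. \<sigma> permutes darts V adj}" by (rule finite_permutations)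
  then show ?thesis by (rule finite_subset[rotated]) (auto simp: rotation_system_def)
qed

lemma min_genus_faces_le:
  assumes "finite V" "\<And>a b. adj a b = adj b a" "\<And>a. \<not> adj a a" "M > 0"
  shows "real_of_int (min_genus_faces V adj) \<le>
    1 + real (card (core_darts V adj)) / real M + real (card (short_cycles V adj M))"
proof -
  let ?S = "num_faces_rot V adj ` {\<sigma>. rotation_system V adj \<sigma>}"
  have "Max ?S \<in> ?S"
    using finite_rotation_systems rotation_system_exists assms(1) by (intro Max_in) auto
  then obtain \<sigma> where \<sigma>: "rotation_system V adj \<sigma>"
    and max: "max_faces_rot V adj = num_faces_rot V adj \<sigma>"
    unfolding max_faces_rot_def by blast
  interpret graph_rotation V adj \<sigma> using assms(1-3) \<sigma> by unfold_locales
  show ?thesis using num_faces_rot_le[OF assms(4)] unfolding min_genus_faces_def max by simp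
qed

section \<open>The random bipartite graph\<close>

lemma prob_Pi_bernoulli_all:
  assumes A: "finite A" and S: "S \<subseteq> A" and p: "0 \<le> p" "p \<le> 1"
  shows "measure_pmf.prob (Pi_pmf A False (\<lambda>_. bernoulli_pmf p)) {E. \<forall>e\<in>S. E e} = p ^ card S"
proof -
  define B where "B e = (if e \<in> S then {True} else UNIV)" for e
  have "{E. \<forall>e\<in>S. E e} = Pi A B" using S by (auto simp: B_def Pi_def)
  then have "measure_pmf.prob (Pi_pmf A False (\<lambda>_. bernoulli_pmf p)) {E. \<forall>e\<in>S. E e}
      = (\<Prod>e\<in>A. measure_pmf.prob (bernoulli_pmf p) (B e))"
    by (simp add: measure_Pi_pmf_Pi[OF A])
  also have "\<dots> = (\<Prod>e\<in>A. if e \<in> S then p else 1)"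
    by (rule prod.cong) (use p in \<open>auto simp: B_def measure_pmf_single\<close>)
  also have "\<dots> = p ^ card S"
    using prod.If_cases[OF A, of "\<lambda>e. e \<in> S" "\<lambda>_. p" "\<lambda>_. 1"] S
    by (simp add: Int_absorb1 Int_commute)
  finally show ?thesis .
qed

lemma expectation_Pi_bernoulli_card:
  assumes A: "finite A" and U: "finite U" and p: "0 \<le> p" "p \<le> 1"
    and S: "\<And>u. u \<in> U \<Longrightarrow> S u \<subseteq> A"
  shows "measure_pmf.expectation (Pi_pmf A False (\<lambda>_. bernoulli_pmf p))
      (\<lambda>E. real (card {u \<in> U. \<forall>e\<in>S u. E e})) = (\<Sum>u\<in>U. p ^ card (S u))"
proof -
  let ?P = "Pi_pmf A False (\<lambda>_. bernoulli_pmf p)"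
  have fin: "finite (set_pmf ?P)" using A by (simp add: set_Pi_pmf finite_PiE_dflt)
  have "real (card {u \<in> U. \<forall>e\<in>S u. E e}) = (\<Sum>u\<in>U. indicator {E. \<forall>e\<in>S u. E e} E)" for E
    using U by (simp add: indicator_def sum.If_cases Int_def)
  then have "measure_pmf.expectation ?P (\<lambda>E. real (card {u \<in> U. \<forall>e\<in>S u. E e}))
      = (\<Sum>u\<in>U. measure_pmf.expectation ?P (indicator {E. \<forall>e\<in>S u. E e}))"
    by (simp add: Bochner_Integration.integral_sum integrable_measure_pmf_finite[OF fin])
  also have "\<dots> = (\<Sum>u\<in>U. p ^ card (S u))"
    by (rule sum.cong) (use prob_Pi_bernoulli_all[OF A S p] in auto)
  finally show ?thesis .
qed

fun bip_edge :: "nat + nat \<Rightarrow> nat + nat \<Rightarrow> nat \<times> nat" where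
  "bip_edge (Inl i) (Inr j) = (i, j)"
| "bip_edge (Inr j) (Inl i) = (i, j)"
| "bip_edge _ _ = (0, 0)" \<comment> \<open>junk value: only used for vertices on opposite sides\<close>

lemma bip_adj_iff: "bip_adj E x y \<longleftrightarrow> isl x \<noteq> isl y \<and> E (bip_edge x y)"
  by (cases x; cases y) auto

lemma bip_adj_sym: "bip_adj E a b = bip_adj E b a"
  by (cases a; cases b) auto

lemma bip_adj_irrefl: "\<not> bip_adj E a a"
  by (cases a) auto

lemma finite_bip_verts: "finite (bip_verts n1 n2)"
  by (simp add: bip_verts_def)

lemma bip_edge_eq_imp_doubleton_eq:
  assumes "isl x \<noteq> isl y" "isl x' \<noteq> isl y'" "bip_edge x y = bip_edge x' y'"
  shows "{x, y} = {x', y'}"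
  using assms by (cases x; cases y; cases x'; cases y') auto

lemma bip_edge_in_grid:
  assumes "isl x \<noteq> isl y" "x \<in> bip_verts n1 n2" "y \<in> bip_verts n1 n2"
  shows "bip_edge x y \<in> {..<n1} \<times> {..<n2}"
  using assms by (cases x; cases y) (auto simp: bip_verts_def)

definition cycle_edges :: "(nat + nat) list \<Rightarrow> (nat \<times> nat) set" where
  "cycle_edges c = (\<lambda>i. bip_edge (c ! i) (c ! (Suc i mod length c))) ` {..<length c}"

definition bip_cycles :: "nat \<Rightarrow> nat \<Rightarrow> nat \<Rightarrow> (nat + nat) list set" where
  "bip_cycles n1 n2 M = short_cycles (bip_verts n1 n2) (bip_adj (\<lambda>_. True)) M"

lemma is_cycle_bip_iff:
  "is_cycle V (bip_adj E) c \<longleftrightarrow> is_cycle V (bip_adj (\<lambda>_. True)) c \<and> (\<forall>e\<in>cycle_edges c. E e)"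
proof (cases "c = []")
  case False
  then show ?thesis
    by (auto simp: is_cycle_def successively_snoc_hd_iff cycle_edges_def bip_adj_iff)
qed (simp add: is_cycle_def)

lemma short_cycles_bip_eq:
  "short_cycles (bip_verts n1 n2) (bip_adj E) M = {c \<in> bip_cycles n1 n2 M. \<forall>e\<in>cycle_edges c. E e}"
  by (auto simp: bip_cycles_def short_cycles_def is_cycle_bip_iff[of _ E])

lemma bip_cycle_alternates:
  assumes "is_cycle V (bip_adj (\<lambda>_. True)) c" "i < length c"
  shows "isl (c ! i) \<noteq> isl (c ! (Suc i mod length c))"
proof -
  have "c \<noteq> []" using assms(2) by auto
  then have "bip_adj (\<lambda>_. True) (c ! i) (c ! (Suc i mod length c))"
    using assms successively_snoc_hd_iff[of c "bip_adj (\<lambda>_. True)"] by (simp add: is_cycle_def)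
  then show ?thesis by (simp add: bip_adj_iff)
qed

lemma cycle_edges_subset:
  assumes "c \<in> bip_cycles n1 n2 M"
  shows "cycle_edges c \<subseteq> {..<n1} \<times> {..<n2}"
  unfolding cycle_edges_def
proof (rule image_subsetI)
  fix i assume i: "i \<in> {..<length c}"
  have c: "is_cycle (bip_verts n1 n2) (bip_adj (\<lambda>_. True)) c"
    using assms by (simp add: bip_cycles_def short_cycles_def)
  have "Suc i mod length c < length c" using i by (intro mod_less_divisor) auto
  then show "bip_edge (c ! i) (c ! (Suc i mod length c)) \<in> {..<n1} \<times> {..<n2}"
    using c i bip_cycle_alternates[OF c] by (intro bip_edge_in_grid) (auto simp: is_cycle_def)
qed

lemma card_cycle_edges:
  assumes c: "is_cycle V (bip_adj (\<lambda>_. True)) c"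
  shows "card (cycle_edges c) = length c"
proof -
  have inj: "inj_on (\<lambda>i. {c ! i, c ! (Suc i mod length c)}) {..<length c}"
    using c by (intro inj_on_cycle_edges) (simp_all add: is_cycle_def)
  have "inj_on (\<lambda>i. bip_edge (c ! i) (c ! (Suc i mod length c))) {..<length c}"
  proof (rule inj_onI)
    fix i j assume i: "i \<in> {..<length c}" and j: "j \<in> {..<length c}"
      and eq: "bip_edge (c ! i) (c ! (Suc i mod length c)) = bip_edge (c ! j) (c ! (Suc j mod length c))"
    have "{c ! i, c ! (Suc i mod length c)} = {c ! j, c ! (Suc j mod length c)}"
      using bip_cycle_alternates[OF c] i j eq by (intro bip_edge_eq_imp_doubleton_eq) auto
    then show "i = j" using inj_onD[OF inj _ i j] by simp
  qed
  then show ?thesis by (simp add: cycle_edges_def card_image)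
qed

lemma expectation_short_cycles:
  assumes p: "0 \<le> p" "p \<le> 1"
  shows "measure_pmf.expectation (G_bip n1 n2 p)
      (\<lambda>E. real (card (short_cycles (bip_verts n1 n2) (bip_adj E) M)))
    = (\<Sum>c\<in>bip_cycles n1 n2 M. p ^ length c)"
proof -
  have "measure_pmf.expectation (G_bip n1 n2 p)
      (\<lambda>E. real (card (short_cycles (bip_verts n1 n2) (bip_adj E) M)))
    = (\<Sum>c\<in>bip_cycles n1 n2 M. p ^ card (cycle_edges c))"
    unfolding G_bip_def short_cycles_bip_eq
    by (rule expectation_Pi_bernoulli_card[OF _ _ p cycle_edges_subset])
       (simp_all add: bip_cycles_def finite_short_cycles finite_bip_verts)
  also have "\<dots> = (\<Sum>c\<in>bip_cycles n1 n2 M. p ^ length c)"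
    by (rule sum.cong) (auto simp: card_cycle_edges bip_cycles_def short_cycles_def)
  finally show ?thesis .
qed

lemma bip_cycle_parity:
  assumes c: "is_cycle V (bip_adj (\<lambda>_. True)) c" and i: "i < length c"
  shows "isl (c ! i) \<longleftrightarrow> (isl (c ! 0) \<longleftrightarrow> even i)"
  using i
proof (induction i)
  case (Suc i)
  then have "isl (c ! i) \<noteq> isl (c ! Suc i)" using bip_cycle_alternates[OF c, of i] by simp
  then show ?case using Suc by auto
qed simp

lemma bip_cycle_even_length:
  assumes c: "is_cycle V (bip_adj (\<lambda>_. True)) c"
  shows "even (length c)"
proof (rule ccontr)
  assume odd: "odd (length c)"
  have L: "length c - 1 < length c" "Suc (length c - 1) = length c"
    using c by (auto simp: is_cycle_def)
  have "isl (c ! (length c - 1)) \<noteq> isl (c ! 0)" using bip_cycle_alternates[OF c L(1)] L(2) by simp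
  moreover have "even (length c - 1)" using odd L(2) by (metis even_Suc)
  ultimately show False using bip_cycle_parity[OF c L(1)] by simp
qed

lemma card_le_prod_if_nth_in:
  assumes "\<And>xs. xs \<in> X \<Longrightarrow> length xs = L \<and> (\<forall>i<L. xs ! i \<in> B i)"
    and "\<And>i. i < L \<Longrightarrow> finite (B i)"
  shows "card X \<le> (\<Prod>i<L. card (B i))"
proof -
  let ?g = "\<lambda>xs. restrict (\<lambda>i. xs ! i) {..<L}"
  have "inj_on ?g X"
  proof (rule inj_onI)
    fix xs ys assume xs: "xs \<in> X" and ys: "ys \<in> X" and eq: "?g xs = ?g ys"
    have "xs ! i = ys ! i" if "i < L" for i using fun_cong[OF eq, of i] that by simp
    then show "xs = ys" using assms(1)[OF xs] assms(1)[OF ys] by (auto intro: nth_equalityI)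
  qed
  moreover have "?g ` X \<subseteq> PiE {..<L} B" using assms(1) by (auto simp: PiE_def)
  moreover have "finite (PiE {..<L} B)" by (rule finite_PiE) (use assms(2) in auto)
  ultimately have "card X \<le> card (PiE {..<L} B)" by (rule card_inj_on_le)
  also have "\<dots> = (\<Prod>i<L. card (B i))" by (rule card_PiE) simp
  finally show ?thesis .
qed

lemma prod_alternating: "(\<Prod>i<2 * j. if even i then a else b) = (a :: nat) ^ j * b ^ j"
proof (induction j)
  case (Suc j)
  have "{..<2 * Suc j} = insert (Suc (2 * j)) (insert (2 * j) {..<2 * j})" by auto
  then show ?case using Suc by simp
qed simp

lemma card_bip_cycles_of_length:
  "card {c \<in> bip_cycles n1 n2 M. length c = 2 * j} \<le> 2 * (n1 ^ j * n2 ^ j)"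
proof -
  define side where "side b = (if b then Inl ` {..<n1} else Inr ` {..<n2})" for b
  let ?X = "\<lambda>b. {c \<in> bip_cycles n1 n2 M. length c = 2 * j \<and> isl (c ! 0) = b}"
  have le: "card (?X b) \<le> (\<Prod>i<2 * j. card (side (b \<longleftrightarrow> even i)))" for b
  proof (rule card_le_prod_if_nth_in)
    fix c assume "c \<in> ?X b"
    then have c: "is_cycle (bip_verts n1 n2) (bip_adj (\<lambda>_. True)) c" "length c = 2 * j"
      "isl (c ! 0) = b" by (auto simp: bip_cycles_def short_cycles_def)
    have "c ! i \<in> side (b \<longleftrightarrow> even i)" if "i < 2 * j" for i
    proof -
      have "c ! i \<in> bip_verts n1 n2" using c that nth_mem[of i c] by (auto simp: is_cycle_def)
      moreover have "isl (c ! i) \<longleftrightarrow> (b \<longleftrightarrow> even i)"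
        using bip_cycle_parity[OF c(1)] c(2,3) that by simp
      ultimately show ?thesis by (cases "c ! i") (auto simp: bip_verts_def side_def)
    qed
    then show "length c = 2 * j \<and> (\<forall>i<2 * j. c ! i \<in> side (b \<longleftrightarrow> even i))" using c(2) by blast
  qed (simp add: side_def)
  have eq: "(\<Prod>i<2 * j. card (side (b \<longleftrightarrow> even i))) = n1 ^ j * n2 ^ j" for b
  proof -
    have "(\<Prod>i<2 * j. card (side (b \<longleftrightarrow> even i)))
        = (\<Prod>i<2 * j. if even i then (if b then n1 else n2) else (if b then n2 else n1))"
      by (rule prod.cong[OF refl]) (simp add: side_def card_image)
    also have "\<dots> = (if b then n1 else n2) ^ j * (if b then n2 else n1) ^ j"
      by (rule prod_alternating)
    finally show ?thesis by (cases b) (simp_all add: mult.commute)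
  qed
  have bound: "card (?X b) \<le> n1 ^ j * n2 ^ j" for b using le[of b] eq[of b] by simp
  have "card {c \<in> bip_cycles n1 n2 M. length c = 2 * j} = card (?X True \<union> ?X False)"
    by (rule arg_cong[where f = card]) blast
  also have "\<dots> \<le> card (?X True) + card (?X False)" by (rule card_Un_le)
  also have "\<dots> \<le> n1 ^ j * n2 ^ j + n1 ^ j * n2 ^ j" using bound[of True] bound[of False] by (rule add_mono)
  finally show ?thesis by simp
qed

lemma sum_bip_cycles_le:
  assumes p: "0 \<le> p"
  shows "(\<Sum>c\<in>bip_cycles n1 n2 M. p ^ length c)
    \<le> (\<Sum>L\<le>M. 2 * (real n1 * real n2 * p\<^sup>2) ^ (L div 2))"
proof -
  let ?C = "bip_cycles n1 n2 M"
  have "finite ?C" by (simp add: bip_cycles_def finite_short_cycles finite_bip_verts)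
  then have "(\<Sum>c\<in>?C. p ^ length c) = (\<Sum>L\<le>M. \<Sum>c\<in>{c \<in> ?C. length c = L}. p ^ length c)"
    by (intro sum.group[symmetric]) (auto simp: bip_cycles_def short_cycles_def)
  also have "\<dots> \<le> (\<Sum>L\<le>M. 2 * (real n1 * real n2 * p\<^sup>2) ^ (L div 2))"
  proof (rule sum_mono)
    fix L
    have sum_eq: "(\<Sum>c\<in>{c \<in> ?C. length c = L}. p ^ length c) = card {c \<in> ?C. length c = L} * p ^ L"
      by simp
    show "(\<Sum>c\<in>{c \<in> ?C. length c = L}. p ^ length c) \<le> 2 * (real n1 * real n2 * p\<^sup>2) ^ (L div 2)"
    proof (cases "even L")
      case True
      then obtain j where j: "L = 2 * j" by blast
      have "real (card {c \<in> ?C. length c = L}) \<le> real (2 * (n1 ^ j * n2 ^ j))"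
        using card_bip_cycles_of_length[of n1 n2 M j] unfolding j by (simp only: of_nat_le_iff)
      then have "real (card {c \<in> ?C. length c = L}) \<le> 2 * (real n1 ^ j * real n2 ^ j)" by simp
      then have "card {c \<in> ?C. length c = L} * p ^ L \<le> 2 * (real n1 ^ j * real n2 ^ j) * p ^ L"
        using p by (simp add: mult_right_mono)
      also have "\<dots> = 2 * (real n1 * real n2 * p\<^sup>2) ^ (L div 2)"
        unfolding j by (simp add: power_mult_distrib power_mult)
      finally show ?thesis unfolding sum_eq .
    next
      case False
      then have "{c \<in> ?C. length c = L} = {}"
        using bip_cycle_even_length by (auto simp: bip_cycles_def short_cycles_def)
      then have "(\<Sum>c\<in>{c \<in> ?C. length c = L}. p ^ length c) = 0" by (simp only: sum.empty)
      moreover have "0 \<le> 2 * (real n1 * real n2 * p\<^sup>2) ^ (L div 2)" by simp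
      ultimately show ?thesis by linarith
    qed
  qed
  finally show ?thesis .
qed

definition cherries :: "nat \<Rightarrow> nat \<Rightarrow> (nat \<times> nat \<times> nat) set" where
  "cherries n1 n2 = {(i, j, i'). i < n1 \<and> j < n2 \<and> i' < n1 \<and> i \<noteq> i'}"

fun cherry_edges :: "nat \<times> nat \<times> nat \<Rightarrow> (nat \<times> nat) set" where
  "cherry_edges (i, j, i') = {(i, j), (i', j)}"

lemma card_core_darts_bip_le:
  "card (core_darts (bip_verts n1 n2) (bip_adj E)) \<le> 2 * card {u \<in> cherries n1 n2. \<forall>e\<in>cherry_edges u. E e}"
proof -
  let ?V = "bip_verts n1 n2" and ?Ch = "{u \<in> cherries n1 n2. \<forall>e\<in>cherry_edges u. E e}"
  \<comment> \<open>A core dart is an orientation of an edge ij whose end j has a second neighbour i'.\<close>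
  define orient where
    "orient bu = (case bu of (b, i, j, _) \<Rightarrow> if b then (Inl i, Inr j) else (Inr j, Inl i))"
    for bu :: "bool \<times> nat \<times> nat \<times> nat"
  have "core_darts ?V (bip_adj E) \<subseteq> orient ` (UNIV \<times> ?Ch)"
  proof
    fix x assume "x \<in> core_darts ?V (bip_adj E)"
    then obtain a b where x: "x = (a, b)" "a \<in> ?V" "b \<in> ?V" "bip_adj E a b"
      and wa: "\<exists>w\<in>?V. bip_adj E a w \<and> w \<noteq> b" and wb: "\<exists>w\<in>?V. bip_adj E b w \<and> w \<noteq> a"
      by (auto simp: core_darts_def darts_def)
    show "x \<in> orient ` (UNIV \<times> ?Ch)"
    proof (cases a)
      case (Inl i)
      then obtain j where b: "b = Inr j" using x(4) by (cases b) auto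
      obtain w where w: "w \<in> ?V" "bip_adj E b w" "w \<noteq> a" using wb by blast
      then obtain i' where "w = Inl i'" using b by (cases w) auto
      then have "(i, j, i') \<in> ?Ch" using x w Inl b by (auto simp: cherries_def bip_verts_def)
      then show ?thesis using x(1) Inl b by (intro rev_image_eqI[of "(True, i, j, i')"]) (simp_all add: orient_def)
    next
      case (Inr j)
      then obtain i where b: "b = Inl i" using x(4) by (cases b) auto
      obtain w where w: "w \<in> ?V" "bip_adj E a w" "w \<noteq> b" using wa by blast
      then obtain i' where "w = Inl i'" using Inr by (cases w) auto
      then have "(i, j, i') \<in> ?Ch" using x w Inr b by (auto simp: cherries_def bip_verts_def)
      then show ?thesis using x(1) Inr b by (intro rev_image_eqI[of "(False, i, j, i')"]) (simp_all add: orient_def)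
    qed
  qed
  moreover have "finite ?Ch"
    by (rule finite_subset[of _ "{..<n1} \<times> {..<n2} \<times> {..<n1}"]) (auto simp: cherries_def)
  then have "finite ((UNIV :: bool set) \<times> ?Ch)" by simp
  ultimately have "card (core_darts ?V (bip_adj E)) \<le> card ((UNIV :: bool set) \<times> ?Ch)"
    by (intro surj_card_le)
  then show ?thesis by (simp add: card_cartesian_product)
qed

lemma expectation_cherries_le:
  assumes p: "0 \<le> p" "p \<le> 1"
  shows "measure_pmf.expectation (G_bip n1 n2 p)
      (\<lambda>E. real (card {u \<in> cherries n1 n2. \<forall>e\<in>cherry_edges u. E e})) \<le> real n1 * real n2 * real n1 * p\<^sup>2"
proof -
  have sub: "cherries n1 n2 \<subseteq> {..<n1} \<times> {..<n2} \<times> {..<n1}" by (auto simp: cherries_def)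
  have "measure_pmf.expectation (G_bip n1 n2 p)
      (\<lambda>E. real (card {u \<in> cherries n1 n2. \<forall>e\<in>cherry_edges u. E e}))
    = (\<Sum>u\<in>cherries n1 n2. p ^ card (cherry_edges u))"
    unfolding G_bip_def using sub
    by (intro expectation_Pi_bernoulli_card p) (auto simp: cherries_def intro: finite_subset)
  also have "\<dots> = (\<Sum>u\<in>cherries n1 n2. p\<^sup>2)"
    by (rule sum.cong) (auto simp: cherries_def power2_eq_square)
  also have "\<dots> = real (card (cherries n1 n2)) * p\<^sup>2" by simp
  also have "\<dots> \<le> real n1 * real n2 * real n1 * p\<^sup>2"
  proof (rule mult_right_mono)
    have "card (cherries n1 n2) \<le> card ({..<n1} \<times> {..<n2} \<times> {..<n1})" using sub by (intro card_mono) auto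
    then show "real (card (cherries n1 n2)) \<le> real n1 * real n2 * real n1"
      by (simp add: card_cartesian_product flip: of_nat_mult)
  qed simp
  finally show ?thesis .
qed

definition faces_majorant :: "nat \<Rightarrow> nat \<Rightarrow> nat \<Rightarrow> (nat \<times> nat \<Rightarrow> bool) \<Rightarrow> real" where
  "faces_majorant n1 n2 M E =
     1 + 2 * real (card {u \<in> cherries n1 n2. \<forall>e\<in>cherry_edges u. E e}) / real M
       + real (card (short_cycles (bip_verts n1 n2) (bip_adj E) M))"

lemma f_bip_le_faces_majorant:
  assumes "M > 0"
  shows "real_of_int (f_bip n1 n2 E) \<le> faces_majorant n1 n2 M E"
proof -
  let ?Ch = "{u \<in> cherries n1 n2. \<forall>e\<in>cherry_edges u. E e}"
  have "real (card (core_darts (bip_verts n1 n2) (bip_adj E))) \<le> real (2 * card ?Ch)"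
    using card_core_darts_bip_le by (simp only: of_nat_le_iff)
  then have "real (card (core_darts (bip_verts n1 n2) (bip_adj E))) / real M \<le> 2 * real (card ?Ch) / real M"
    by (intro divide_right_mono) simp_all
  then show ?thesis
    using min_genus_faces_le[where V = "bip_verts n1 n2" and adj = "bip_adj E",
        OF finite_bip_verts bip_adj_sym bip_adj_irrefl assms]
    unfolding f_bip_def faces_majorant_def by linarith
qed

lemma scaled_edge_probability:
  assumes "1 \<le> n1" "n1 \<le> n2" "0 \<le> d" "d \<le> real n1"
  shows "0 \<le> d / sqrt (real n1 * real n2)" "d / sqrt (real n1 * real n2) \<le> 1"
    "real n1 * real n2 * (d / sqrt (real n1 * real n2))\<^sup>2 = d\<^sup>2"
proof -
  have pos: "0 < real n1 * real n2" using assms(1,2) by simp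
  have "(real n1)\<^sup>2 \<le> real n1 * real n2" using assms(2) by (simp add: power2_eq_square mult_left_mono)
  then have "real n1 \<le> sqrt (real n1 * real n2)" by (rule real_le_rsqrt)
  then show "d / sqrt (real n1 * real n2) \<le> 1" using assms(4) pos by (simp add: divide_le_eq_1)
  show "0 \<le> d / sqrt (real n1 * real n2)" using assms(3) by simp
  have "(sqrt (real n1 * real n2))\<^sup>2 = real n1 * real n2" using pos by simp
  moreover have "n1 > 0" "n2 > 0" using assms(1,2) by auto
  ultimately show "real n1 * real n2 * (d / sqrt (real n1 * real n2))\<^sup>2 = d\<^sup>2"
    unfolding power_divide by simp
qed

lemma expectation_faces_majorant_le:
  assumes n: "1 \<le> n1" "n1 \<le> n2" and d: "0 \<le> d" "d \<le> real n1"
  shows "measure_pmf.expectation (G_bip n1 n2 (d / sqrt (real n1 * real n2))) (faces_majorant n1 n2 M)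
    \<le> 1 + 2 * (d\<^sup>2 * real n1) / real M + (\<Sum>L\<le>M. 2 * (d\<^sup>2) ^ (L div 2))"
proof -
  define p where "p = d / sqrt (real n1 * real n2)"
  note p = scaled_edge_probability[OF n d, folded p_def]
  let ?G = "G_bip n1 n2 p"
  let ?Ch = "\<lambda>E. real (card {u \<in> cherries n1 n2. \<forall>e\<in>cherry_edges u. E e})"
  let ?Cy = "\<lambda>E. real (card (short_cycles (bip_verts n1 n2) (bip_adj E) M))"
  have int: "integrable ?G f" for f :: "_ \<Rightarrow> real"
    by (rule integrable_measure_pmf_finite) (simp add: G_bip_def set_Pi_pmf finite_PiE_dflt)
  have "measure_pmf.expectation ?G (faces_majorant n1 n2 M)
      = 1 + 2 * measure_pmf.expectation ?G ?Ch / real M + measure_pmf.expectation ?G ?Cy"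
    unfolding faces_majorant_def by (simp add: int measure_pmf.prob_space)
  moreover have "measure_pmf.expectation ?G ?Ch \<le> d\<^sup>2 * real n1"
    using expectation_cherries_le[OF p(1,2), of n1 n2] p(3) by (simp add: algebra_simps)
  then have "2 * measure_pmf.expectation ?G ?Ch / real M \<le> 2 * (d\<^sup>2 * real n1) / real M"
    by (intro divide_right_mono) simp_all
  moreover have "measure_pmf.expectation ?G ?Cy \<le> (\<Sum>L\<le>M. 2 * (d\<^sup>2) ^ (L div 2))"
    using expectation_short_cycles[OF p(1,2)] sum_bip_cycles_le[OF p(1), of n1 n2 M] p(3) by simp
  ultimately show ?thesis unfolding p_def by linarith
qed

lemma prob_many_faces_le:
  assumes n: "1 \<le> n1" "n1 \<le> n2" and d: "0 \<le> d" "d \<le> real n1" and M: "M > 0" and \<epsilon>: "\<epsilon> > 0"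
  shows "measure_pmf.prob (G_bip n1 n2 (d / sqrt (real n1 * real n2)))
      {E. \<not> real_of_int (f_bip n1 n2 E) \<le> \<epsilon> * real n1}
    \<le> (1 + (\<Sum>L\<le>M. 2 * (d\<^sup>2) ^ (L div 2))) / \<epsilon> / real n1 + 2 * d\<^sup>2 / \<epsilon> / real M"
proof -
  let ?G = "G_bip n1 n2 (d / sqrt (real n1 * real n2))" and ?Y = "faces_majorant n1 n2 M"
  have pos: "0 < \<epsilon> * real n1" using n \<epsilon> by simp
  have "{E. \<not> real_of_int (f_bip n1 n2 E) \<le> \<epsilon> * real n1} \<subseteq> {E \<in> space ?G. \<epsilon> * real n1 \<le> ?Y E}"
  proof
    fix E assume "E \<in> {E. \<not> real_of_int (f_bip n1 n2 E) \<le> \<epsilon> * real n1}"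
    then have "\<epsilon> * real n1 < real_of_int (f_bip n1 n2 E)" by simp
    also have "\<dots> \<le> ?Y E" by (rule f_bip_le_faces_majorant[OF M])
    finally show "E \<in> {E \<in> space ?G. \<epsilon> * real n1 \<le> ?Y E}" by simp
  qed
  then have "measure_pmf.prob ?G {E. \<not> real_of_int (f_bip n1 n2 E) \<le> \<epsilon> * real n1}
      \<le> measure_pmf.prob ?G {E \<in> space ?G. \<epsilon> * real n1 \<le> ?Y E}"
    by (rule measure_pmf.finite_measure_mono) simp
  also have "\<dots> \<le> measure_pmf.expectation ?G ?Y / (\<epsilon> * real n1)"
    by (rule integral_Markov_inequality_measure[OF _ _ _ pos])
       (simp_all add: integrable_measure_pmf_finite G_bip_def set_Pi_pmf finite_PiE_dflt
         faces_majorant_def)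
  also have "\<dots> \<le> (1 + 2 * (d\<^sup>2 * real n1) / real M + (\<Sum>L\<le>M. 2 * (d\<^sup>2) ^ (L div 2))) / (\<epsilon> * real n1)"
    by (rule divide_right_mono[OF expectation_faces_majorant_le[OF n d]]) (use pos in simp)
  also have "\<dots> = (1 + (\<Sum>L\<le>M. 2 * (d\<^sup>2) ^ (L div 2))) / \<epsilon> / real n1 + 2 * d\<^sup>2 / \<epsilon> / real M"
    using \<epsilon> n M by (simp add: field_simps)
  finally show ?thesis .
qed

lemma tendsto_zero_if_two_scale_bound:
  fixes P A :: "nat \<Rightarrow> real"
  assumes nonneg: "\<And>n. 0 \<le> P n"
    and bound: "\<And>M. M > 0 \<Longrightarrow> eventually (\<lambda>n. P n \<le> A M / real n + B / real M) sequentially"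
  shows "P \<longlonglongrightarrow> 0"
proof (rule order_tendstoI)
  fix a :: real assume "a < 0"
  then show "eventually (\<lambda>n. a < P n) sequentially"
    using nonneg by (intro always_eventually) (meson less_le_trans)
next
  fix r :: real assume r: "0 < r"
  obtain M :: nat where M: "max 1 (2 * B / r) < real M" using reals_Archimedean2 by blast
  then have "M > 0" "2 * B < real M * r" using r by (simp_all add: pos_divide_less_eq)
  then have small: "B / real M < r / 2" by (simp add: field_simps)
  have "eventually (\<lambda>n. A M / real n < r / 2) sequentially"
    using lim_const_over_n[of "A M"] by (rule order_tendstoD(2)) (use r in simp)
  then show "eventually (\<lambda>n. P n < r) sequentially"
    using bound[OF \<open>M > 0\<close>] by eventually_elim (use small in linarith)
qed

lemma prob_many_faces_tendsto_zero:
  assumes "0 \<le> d" "\<And>n1. n1 \<le> n2 n1" "\<epsilon> > 0"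
  shows "(\<lambda>n1. measure_pmf.prob (G_bip n1 (n2 n1) (d / sqrt (real n1 * real (n2 n1))))
      {E. \<not> real_of_int (f_bip n1 (n2 n1) E) \<le> \<epsilon> * real n1}) \<longlonglongrightarrow> 0"
proof (rule tendsto_zero_if_two_scale_bound[where B = "2 * d\<^sup>2 / \<epsilon>"
      and A = "\<lambda>M. (1 + (\<Sum>L\<le>M. 2 * (d\<^sup>2) ^ (L div 2))) / \<epsilon>"])
  fix M :: nat assume "M > 0"
  have "eventually (\<lambda>n1. max 1 d \<le> real n1) sequentially"
    using filterlim_real_sequentially unfolding filterlim_at_top by blast
  then show "eventually (\<lambda>n1.
      measure_pmf.prob (G_bip n1 (n2 n1) (d / sqrt (real n1 * real (n2 n1))))
        {E. \<not> real_of_int (f_bip n1 (n2 n1) E) \<le> \<epsilon> * real n1}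
      \<le> (1 + (\<Sum>L\<le>M. 2 * (d\<^sup>2) ^ (L div 2))) / \<epsilon> / real n1 + 2 * d\<^sup>2 / \<epsilon> / real M) sequentially"
    by eventually_elim (rule prob_many_faces_le; use assms \<open>M > 0\<close> in auto)
qed simp

theorem corollary4p2:
  fixes d :: real and n2 :: "nat \<Rightarrow> nat"
  assumes "d > 1"
    and "\<And>n1. n1 \<le> n2 n1"
  shows "\<forall>\<epsilon>>0. (\<lambda>n1. measure_pmf.prob (G_bip n1 (n2 n1) (d / sqrt (real n1 * real (n2 n1))))
                   {E. real_of_int (f_bip n1 (n2 n1) E) \<le> \<epsilon> * real n1})
              \<longlonglongrightarrow> 1"
proof (intro allI impI)
  fix \<epsilon> :: real assume "\<epsilon> > 0"
  let ?G = "\<lambda>n1. G_bip n1 (n2 n1) (d / sqrt (real n1 * real (n2 n1)))"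
  let ?bad = "\<lambda>n1. {E. \<not> real_of_int (f_bip n1 (n2 n1) E) \<le> \<epsilon> * real n1}"
  have "(\<lambda>n1. 1 - measure_pmf.prob (?G n1) (?bad n1)) \<longlonglongrightarrow> 1 - 0"
    using prob_many_faces_tendsto_zero[OF _ assms(2) \<open>\<epsilon> > 0\<close>] assms(1)
    by (intro tendsto_intros) simp
  moreover have "measure_pmf.prob (?G n1) {E. real_of_int (f_bip n1 (n2 n1) E) \<le> \<epsilon> * real n1}
      = 1 - measure_pmf.prob (?G n1) (?bad n1)" for n1
    using measure_pmf.prob_compl[of "?bad n1" "?G n1"]
    by (simp add: Compl_eq_Diff_UNIV[symmetric] Collect_neg_eq)
  ultimately show "(\<lambda>n1. measure_pmf.prob (?G n1)
      {E. real_of_int (f_bip n1 (n2 n1) E) \<le> \<epsilon> * real n1}) \<longlonglongrightarrow> 1"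
    by simp
qed

end
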